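(* Let $R$ and $Q_R$ be as in the context and let $q\in Q_R$. Then for every $\xi\in\mathbb{R}$ the complex quaternion $F_q(\xi):=\sum_{k\in\mathbb{Z}}\widehat{B_q}(\xi+2\pi k)$ is invertible in $\mathbb{H}_\mathbb{C}$; the function $\widehat{L_q}(\xi):=\widehat{B_q}(\xi)F_q(\xi)^{-1}$ lies in $L^1(\mathbb{R},\mathbb{H}_\mathbb{C})\cap L^2(\mathbb{R},\mathbb{H}_\mathbb{C})$; and the function $$L_q(x):=\frac1{2\pi}\int_\mathbb{R}\widehat{L_q}(\xi)e^{i\xi x}d\xi,\qquad x\in\mathbb{R},$$ satisfies $L_q(m)=\delta_{m,0}$ for all $m\in\mathbb{Z}$.
   Context: $\mathbb{H}_\mathbb{R}$ denotes the real quaternions $a+v_1e_1+v_2e_2+v_3e_3$ with $e_1^2=e_2^2=e_3^2=-1$, $e_1e_2=e_3$, $e_2e_3=e_1$, $e_3e_1=e_2$; $\mathbb{H}_\mathbb{C}$ the complex quaternions (complex coefficients, $i$ commuting with every $e_j$). For $q=a+v$, $v=\sum v_je_j$, $|v|=(\sum v_j^2)^{1/2}$. Quaternionic power: for $z\in\mathbb{C}\setminus\{0\}$, $p=b+u\in\mathbb{H}_\mathbb{R}$, $u\ne0$: $z^p:=z^b[\cos(|u|\log z)+\frac{u}{|u|}\sin(|u|\log z)]$ (principal $\log$, $z^b=e^{b\log z}$). $\Xi(\xi):=\frac{1-e^{-i\xi}}{i\xi}$, $\Xi(0):=1$; $\widehat{B_q}(\xi):=\Xi(\xi)^q$ and $B_q$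 is its inverse Fourier transform (Fourier transform $\hat f(\xi)=\int f(x)e^{-i\xi x}dx$). Classical Hurwitz zeta: $\zeta(s,a)=\sum_{k\ge0}(a+k)^{-s}$. Standing assumption: $R\subset\{w\in\mathbb{C}:\mathrm{Re}\,w>1\}$ is a set with $\overline R=R$ such that for every $w\in R$ and every $\alpha\in(0,1)$, $\zeta(w,\alpha)+e^{-i\pi w}\zeta(w,1-\alpha)\neq0$. Define $Q_R:=\{q=a+v\in\mathbb{H}_\mathbb{R}: v\ne0,\ a+i|v|\in R\}$. *)

theory Defs
  imports "HOL-Analysis.Analysis"
begin

text \<open>Real quaternions are modelled as real^4 and complex quaternions as complex^4;
  component 0 is the scalar part, components 1,2,3 are the coefficients of e1,e2,e3.\<close>

type_synonym hquat = "real ^ 4"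
type_synonym cquat = "complex ^ 4"

definition mk4 :: "'a \<Rightarrow> 'a \<Rightarrow> 'a \<Rightarrow> 'a \<Rightarrow> 'a ^ 4" where
  "mk4 a b c d = (\<chi> i. if i = 0 then a else if i = 1 then b else if i = 2 then c else d)"

definition cq_mult :: "cquat \<Rightarrow> cquat \<Rightarrow> cquat" (infixl "\<otimes>\<^sub>H" 70) where
  "x \<otimes>\<^sub>H y = mk4
     (x$0*y$0 - x$1*y$1 - x$2*y$2 - x$3*y$3)
     (x$0*y$1 + x$1*y$0 + x$2*y$3 - x$3*y$2)
     (x$0*y$2 + x$2*y$0 + x$3*y$1 - x$1*y$3)
     (x$0*y$3 + x$3*y$0 + x$1*y$2 - x$2*y$1)"

definition cq_one :: cquat where
  "cq_one = mk4 1 0 0 0"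

definition cq_invertible :: "cquat \<Rightarrow> bool" where
  "cq_invertible x \<longleftrightarrow> (\<exists>y. x \<otimes>\<^sub>H y = cq_one \<and> y \<otimes>\<^sub>H x = cq_one)"

definition cq_inverse :: "cquat \<Rightarrow> cquat" where
  "cq_inverse x = (THE y. x \<otimes>\<^sub>H y = cq_one \<and> y \<otimes>\<^sub>H x = cq_one)"

definition hq_re :: "hquat \<Rightarrow> real" where
  "hq_re q = q$0"

definition hq_vnorm :: "hquat \<Rightarrow> real" where
  "hq_vnorm q = sqrt ((q$1)^2 + (q$2)^2 + (q$3)^2)"

text \<open>For z = 0 we use the convention 0^p = 0
  (only relevant at the zeros of Xi; there b > 1).\<close>
definition cq_power :: "complex \<Rightarrow> hquat \<Rightarrow> cquat" where
  "cq_power z p =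
     (if z = 0 then 0 else
      (let b = hq_re p; r = hq_vnorm p; w = of_real r * Ln z
       in mk4 (z powr (of_real b) * cos w)
                  (z powr (of_real b) * of_real (p$1 / r) * sin w)
                  (z powr (of_real b) * of_real (p$2 / r) * sin w)
                  (z powr (of_real b) * of_real (p$3 / r) * sin w)))"

definition Xi :: "real \<Rightarrow> complex" where
  "Xi \<xi> = (if \<xi> = 0 then 1 else (1 - exp (- \<i> * of_real \<xi>)) / (\<i> * of_real \<xi>))"

definition Bhat :: "hquat \<Rightarrow> real \<Rightarrow> cquat" where
  "Bhat q \<xi> = cq_power (Xi \<xi>) q"

definition Fq :: "hquat \<Rightarrow> real \<Rightarrow> cquat" where
  "Fq q \<xi> = (\<Sum>\<^sub>\<infinity>k::int. Bhat q (\<xi> + 2 * pi * of_int k))"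

definition Lhat :: "hquat \<Rightarrow> real \<Rightarrow> cquat" where
  "Lhat q \<xi> = Bhat q \<xi> \<otimes>\<^sub>H cq_inverse (Fq q \<xi>)"

definition Lq :: "hquat \<Rightarrow> real \<Rightarrow> cquat" where
  "Lq q x = (1 / (2 * pi)) *\<^sub>R
     integral\<^sup>L lborel (\<lambda>\<xi>. exp (\<i> * of_real \<xi> * of_real x) *s Lhat q \<xi>)"

definition hurwitz_zeta :: "complex \<Rightarrow> real \<Rightarrow> complex" where
  "hurwitz_zeta s a = (\<Sum>k. (of_real (a + real k)) powr (- s))"

definition admissible_R :: "complex set \<Rightarrow> bool" where
  "admissible_R R \<longleftrightarrow>
     R \<subseteq> {w. Re w > 1} \<and> cnj ` R = R \<and>
     (\<forall>w\<in>R. \<forall>\<alpha>::real. 0 < \<alpha> \<and> \<alpha> < 1 \<longrightarrow>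
        hurwitz_zeta w \<alpha> + exp (- \<i> * of_real pi * w) * hurwitz_zeta w (1 - \<alpha>) \<noteq> 0)"

definition Q_R :: "complex set \<Rightarrow> hquat set" where
  "Q_R R = {q. hq_vnorm q \<noteq> 0 \<and> Complex (hq_re q) (hq_vnorm q) \<in> R}"

end

theory Submission
  imports Defs
begin

text \<open>
  Write q = a + v with v \<noteq> 0, e = v / |v| and w = a + i |v|.  As e^2 = -1, the elements (1 \<mp> i e) / 2
  are complementary orthogonal idempotents and z^q = z^w (1 - i e) / 2 + z^(cnj w) (1 + i e) / 2, so in
  this basis quaternionic multiplication is componentwise and everything reduces to the scalar functions
  Xi^w, its 2\<pi>-periodization T_w and Xi^w / T_w (and the same for cnj w).
  For 0 < \<xi> < 2\<pi> the terms Xi(\<xi> + 2\<pi>k)^w all have argument -\<xi>/2 or \<pi> - \<xi>/2, so T_w(\<xi>) is a nonzero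
  multiple of \<zeta>(w, \<alpha>) + e^(i\<pi>w) \<zeta>(w, 1 - \<alpha>) with \<alpha> = \<xi>/2\<pi>, which is nonzero by the hypothesis on R
  taken at 1 - \<alpha>; also T_w(0) = 1.  Being continuous and periodic, T_w is bounded away from zero, so
  Xi^w / T_w is bounded and decays like |\<xi>|^(-Re w).  Folding the line onto one period turns
  \<integral> e^(im\<xi>) Xi^w(\<xi>) / T_w(\<xi>) d\<xi> into \<integral>_[0,2\<pi>) e^(im\<xi>) d\<xi> = 2\<pi> \<delta>_m0.
\<close>

section \<open>Complex quaternions and the spectral decomposition of \<open>z\<^sup>q\<close>\<close>

lemma mk4_nth [simp]:
  "mk4 a b c d $ 0 = a" "mk4 a b c d $ 1 = b" "mk4 a b c d $ 2 = c" "mk4 a b c d $ 3 = d"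
  by (simp_all add: mk4_def)

lemma vec4_eqI:
  fixes x y :: "'a ^ 4"
  assumes "x$0 = y$0" "x$1 = y$1" "x$2 = y$2" "x$3 = y$3"
  shows "x = y"
proof -
  have "(4::4) = 0" by simp
  hence "x$i = y$i" for i :: 4
    using assms exhaust_4[of i] by metis
  thus ?thesis by (simp add: vec_eq_iff)
qed

lemma cq_mult_assoc: "(x \<otimes>\<^sub>H y) \<otimes>\<^sub>H z = x \<otimes>\<^sub>H (y \<otimes>\<^sub>H z)"
  by (rule vec4_eqI) (simp_all add: cq_mult_def algebra_simps)

lemma cq_one_mult [simp]: "cq_one \<otimes>\<^sub>H x = x"
  and cq_mult_one [simp]: "x \<otimes>\<^sub>H cq_one = x"
  by (rule vec4_eqI; simp add: cq_mult_def cq_one_def)+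

lemma cq_mult_add_left: "(x + y) \<otimes>\<^sub>H z = x \<otimes>\<^sub>H z + y \<otimes>\<^sub>H z"
  and cq_mult_add_right: "x \<otimes>\<^sub>H (y + z) = x \<otimes>\<^sub>H y + x \<otimes>\<^sub>H z"
  and cq_mult_smult_left: "(a *s x) \<otimes>\<^sub>H y = a *s (x \<otimes>\<^sub>H y)"
  and cq_mult_smult_right: "x \<otimes>\<^sub>H (a *s y) = a *s (x \<otimes>\<^sub>H y)"
  by (rule vec4_eqI; simp add: cq_mult_def algebra_simps)+

lemma cq_inverse_unique:
  assumes "x \<otimes>\<^sub>H y = cq_one" "y \<otimes>\<^sub>H x = cq_one"
  shows "cq_invertible x" "cq_inverse x = y"
proof -
  show "cq_invertible x" using assms unfolding cq_invertible_def by blast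
  show "cq_inverse x = y" unfolding cq_inverse_def
  proof (rule the_equality)
    fix y' assume y': "x \<otimes>\<^sub>H y' = cq_one \<and> y' \<otimes>\<^sub>H x = cq_one"
    have "y' = (y \<otimes>\<^sub>H x) \<otimes>\<^sub>H y'" using assms by simp
    also have "\<dots> = y \<otimes>\<^sub>H (x \<otimes>\<^sub>H y')" by (rule cq_mult_assoc)
    also have "\<dots> = y" using y' by simp
    finally show "y' = y" .
  qed (use assms in auto)
qed

lemma norm_vec_smult:
  fixes v :: "'a::real_normed_field ^ 'n"
  shows "norm (c *s v) = norm c * norm v"
  unfolding norm_vec_def
  by (simp add: norm_mult power_mult_distrib sum_distrib_left[symmetric] real_sqrt_mult L2_set_def)

lemma bounded_linear_vec_smult_left:
  fixes v :: "'a::real_normed_field ^ 'n"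
  shows "bounded_linear (\<lambda>c. c *s v)"
proof (rule bounded_linear_intro[where K="norm v"])
  show "(x + y) *s v = x *s v + y *s v" for x y
    by (simp add: vector_sadd_rdistrib)
  show "(r *\<^sub>R x) *s v = r *\<^sub>R (x *s v)" for r x
    by (simp add: vec_eq_iff scaleR_conv_of_real[where 'a='a] mult.assoc)
qed (simp add: norm_vec_smult)

lemma hq_unit_vector:
  assumes "hq_vnorm q \<noteq> 0"
  shows "(q$1 / hq_vnorm q)\<^sup>2 + (q$2 / hq_vnorm q)\<^sup>2 + (q$3 / hq_vnorm q)\<^sup>2 = 1"
proof -
  have "(q$1)\<^sup>2 + (q$2)\<^sup>2 + (q$3)\<^sup>2 = (hq_vnorm q)\<^sup>2"
    unfolding hq_vnorm_def by simp
  moreover have "(q$1 / hq_vnorm q)\<^sup>2 + (q$2 / hq_vnorm q)\<^sup>2 + (q$3 / hq_vnorm q)\<^sup>2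
                 = ((q$1)\<^sup>2 + (q$2)\<^sup>2 + (q$3)\<^sup>2) / (hq_vnorm q)\<^sup>2"
    by (simp add: power_divide add_divide_distrib)
  ultimately show ?thesis using assms by simp
qed

text \<open>cq_idempotent q \<sigma> is (1 - \<sigma> i e) / 2 with e = v / |v|, written using -i = 1 / i.\<close>

definition cq_idempotent :: "hquat \<Rightarrow> complex \<Rightarrow> cquat" where
  "cq_idempotent q \<sigma> = (let r = hq_vnorm q in
     mk4 (1 / 2) (\<sigma> * of_real (q$1 / r) / (2 * \<i>)) (\<sigma> * of_real (q$2 / r) / (2 * \<i>))
       (\<sigma> * of_real (q$3 / r) / (2 * \<i>)))"

lemma cq_idempotent_mult:
  assumes "hq_vnorm q \<noteq> 0" "\<sigma> * \<sigma> = 1"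
  shows "cq_idempotent q \<sigma> \<otimes>\<^sub>H cq_idempotent q \<sigma> = cq_idempotent q \<sigma>"
    and "cq_idempotent q \<sigma> \<otimes>\<^sub>H cq_idempotent q (- \<sigma>) = 0"
proof -
  define u1 u2 u3 where "u1 = complex_of_real (q$1 / hq_vnorm q)"
    and "u2 = complex_of_real (q$2 / hq_vnorm q)" and "u3 = complex_of_real (q$3 / hq_vnorm q)"
  have "u1\<^sup>2 + u2\<^sup>2 + u3\<^sup>2 = 1"
    using arg_cong[OF hq_unit_vector[OF assms(1)], of complex_of_real]
    unfolding u1_def u2_def u3_def by simp
  hence u3: "u3 * u3 = 1 - u1 * u1 - u2 * u2" by (simp add: power2_eq_square algebra_simps)
  have \<sigma>: "\<sigma> * (\<sigma> * x) = x" for x using assms(2) by (simp add: mult.assoc[symmetric])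
  show "cq_idempotent q \<sigma> \<otimes>\<^sub>H cq_idempotent q \<sigma> = cq_idempotent q \<sigma>"
    "cq_idempotent q \<sigma> \<otimes>\<^sub>H cq_idempotent q (- \<sigma>) = 0"
    unfolding cq_idempotent_def Let_def u1_def[symmetric] u2_def[symmetric] u3_def[symmetric]
    by (rule vec4_eqI; simp add: cq_mult_def field_simps u3 \<sigma> assms(2))+
qed

definition cq_spectral :: "hquat \<Rightarrow> complex \<Rightarrow> complex \<Rightarrow> cquat" where
  "cq_spectral q P M = P *s cq_idempotent q 1 + M *s cq_idempotent q (- 1)"

lemma cq_spectral_mult:
  assumes "hq_vnorm q \<noteq> 0"
  shows "cq_spectral q P M \<otimes>\<^sub>H cq_spectral q P' M' = cq_spectral q (P * P') (M * M')"
proof -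
  have "cq_idempotent q 1 \<otimes>\<^sub>H cq_idempotent q 1 = cq_idempotent q 1"
    "cq_idempotent q (- 1) \<otimes>\<^sub>H cq_idempotent q (- 1) = cq_idempotent q (- 1)"
    "cq_idempotent q 1 \<otimes>\<^sub>H cq_idempotent q (- 1) = 0"
    "cq_idempotent q (- 1) \<otimes>\<^sub>H cq_idempotent q 1 = 0"
    using cq_idempotent_mult[OF assms, of 1] cq_idempotent_mult[OF assms, of "- 1"] by simp_all
  thus ?thesis
    by (simp add: cq_spectral_def cq_mult_add_left cq_mult_add_right cq_mult_smult_left
        cq_mult_smult_right vector_smult_assoc mult.commute)
qed

lemma cq_spectral_one: "cq_spectral q 1 1 = cq_one"
  by (rule vec4_eqI) (simp_all add: cq_spectral_def cq_idempotent_def cq_one_def Let_def)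

lemma cq_spectral_zero: "cq_spectral q 0 0 = 0"
  by (simp add: cq_spectral_def)

lemma cq_spectral_smult: "c *s cq_spectral q P M = cq_spectral q (c * P) (c * M)"
  by (simp add: cq_spectral_def vector_add_ldistrib vector_smult_assoc)

lemma cq_spectral_scaleR: "r *\<^sub>R cq_spectral q P M = cq_spectral q (of_real r * P) (of_real r * M)"
  by (simp add: cq_spectral_def vec_eq_iff scaleR_conv_of_real[where 'a=complex] algebra_simps)

lemma cq_spectral_inverse:
  assumes "hq_vnorm q \<noteq> 0" "P \<noteq> 0" "M \<noteq> 0"
  shows "cq_invertible (cq_spectral q P M)" "cq_inverse (cq_spectral q P M) = cq_spectral q (1 / P) (1 / M)"
  using cq_inverse_unique[of "cq_spectral q P M" "cq_spectral q (1 / P) (1 / M)"]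
  by (simp_all add: cq_spectral_mult assms cq_spectral_one)

lemma cq_power_eq_spectral:
  assumes "hq_vnorm q \<noteq> 0"
  shows "cq_power z q = cq_spectral q (z powr Complex (hq_re q) (hq_vnorm q))
                                      (z powr Complex (hq_re q) (- hq_vnorm q))"
proof (cases "z = 0")
  case True thus ?thesis by (simp add: cq_power_def cq_spectral_def)
next
  case False
  let ?b = "hq_re q" and ?r = "hq_vnorm q" and ?L = "Ln z"
  define P M where "P = z powr Complex ?b ?r" and "M = z powr Complex ?b (- ?r)"
  have P: "P = z powr of_real ?b * exp (\<i> * (of_real ?r * ?L))"
    and M: "M = z powr of_real ?b * exp (- (\<i> * (of_real ?r * ?L)))"
    unfolding P_def M_def using False by (simp_all add: powr_def Complex_eq exp_add[symmetric] algebra_simps)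
  have c: "z powr of_real ?b * cos (of_real ?r * ?L) = (P + M) / 2"
    unfolding P M cos_exp_eq by (simp add: field_simps)
  have s: "z powr of_real ?b * x * sin (of_real ?r * ?L) = x * ((P - M) / (2 * \<i>))" for x
    unfolding P M sin_exp_eq by (simp add: field_simps)
  show ?thesis
    unfolding P_def[symmetric] M_def[symmetric]
    by (intro vec4_eqI; simp only: cq_power_def Let_def False if_False mk4_nth c s)
      (simp_all add: cq_spectral_def cq_idempotent_def Let_def field_simps assms)
qed

lemma has_sum_cq_spectral:
  assumes "(f has_sum a) A" "(g has_sum b) A"
  shows "((\<lambda>k. cq_spectral q (f k) (g k)) has_sum cq_spectral q a b) A"
  unfolding cq_spectral_def
  by (intro has_sum_add has_sum_bounded_linear[OF bounded_linear_vec_smult_left] assms)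

lemma integrable_cq_spectral:
  assumes "integrable M f" "integrable M g"
  shows "integrable M (\<lambda>x. cq_spectral q (f x) (g x))"
  unfolding cq_spectral_def
  by (intro Bochner_Integration.integrable_add integrable_bounded_linear[OF bounded_linear_vec_smult_left] assms)

lemma integral_cq_spectral:
  assumes "integrable M f" "integrable M g"
  shows "(\<integral>x. cq_spectral q (f x) (g x) \<partial>M) = cq_spectral q (integral\<^sup>L M f) (integral\<^sup>L M g)"
  unfolding cq_spectral_def using assms
  by (simp add: integral_bounded_linear[OF bounded_linear_vec_smult_left]
      integrable_bounded_linear[OF bounded_linear_vec_smult_left])

lemma norm_cq_spectral_le:
  "norm (cq_spectral q P M) \<le> (norm P + norm M) * (norm (cq_idempotent q 1) + norm (cq_idempotent q (- 1)))"
proof -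
  have "norm (cq_spectral q P M) \<le> norm P * norm (cq_idempotent q 1) + norm M * norm (cq_idempotent q (- 1))"
    unfolding cq_spectral_def by (rule order_trans[OF norm_triangle_ineq]) (simp add: norm_vec_smult)
  also have "\<dots> \<le> (norm P + norm M) * (norm (cq_idempotent q 1) + norm (cq_idempotent q (- 1)))"
    by (simp add: algebra_simps)
  finally show ?thesis .
qed

lemma norm_powr_le:
  fixes z w :: complex
  shows "norm (z powr w) \<le> exp (pi * \<bar>Im w\<bar>) * norm z powr Re w"
proof (cases "z = 0")
  case True thus ?thesis by simp
next
  case False
  have "\<bar>Arg z\<bar> \<le> pi" using Arg_bounded[of z] by auto
  hence "\<bar>Im w * Arg z\<bar> \<le> \<bar>Im w\<bar> * pi" by (simp add: abs_mult mult_left_mono)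
  hence "- Im w * Arg z \<le> pi * \<bar>Im w\<bar>" by (simp add: abs_le_iff mult.commute)
  thus ?thesis using False by (auto simp: norm_powr_complex mult.commute intro!: mult_left_mono)
qed

lemma of_real_powr_minus:
  fixes w :: complex
  assumes "a > 0"
  shows "of_real a powr (- w) = exp (- w * of_real (ln a))"
  using assms by (simp add: powr_def Ln_of_real)

lemma isCont_if_eq_0:
  fixes g :: "real \<Rightarrow> real"
  assumes "(g \<longlongrightarrow> c) (at 0)" "\<And>x. x \<noteq> 0 \<Longrightarrow> isCont g x"
  shows "isCont (\<lambda>t. if t = 0 then c else g t) x"
proof (cases "x = 0")
  case True
  have "((\<lambda>t. if t = 0 then c else g t) \<longlongrightarrow> c) (at 0)"
    using assms(1) by (rule tendsto_cong[THEN iffD1, rotated]) (simp add: eventually_at_filter)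
  thus ?thesis using True by (simp add: isCont_def)
next
  case False
  have "\<forall>\<^sub>F t in nhds x. g t = (if t = 0 then c else g t)"
    using t1_space_nhds[OF False] by eventually_elim simp
  hence "isCont g x = isCont (\<lambda>t. if t = 0 then c else g t) x"
    by (rule isCont_cong)
  thus ?thesis using assms(2)[OF False] by simp
qed

lemma has_sum_int_split:
  fixes \<phi> :: "int \<Rightarrow> 'a::banach"
  assumes "summable (\<lambda>n. norm (\<phi> (int n)))" "summable (\<lambda>n. norm (\<phi> (- int n - 1)))"
  shows "(\<phi> has_sum (\<Sum>n. \<phi> (int n) + \<phi> (- int n - 1))) UNIV"
proof -
  have "((\<lambda>n. \<phi> (int n)) has_sum (\<Sum>n. \<phi> (int n))) UNIV"
    using norm_summable_imp_has_sum[OF assms(1) summable_sums[OF summable_norm_cancel[OF assms(1)]]] .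
  hence nonneg: "(\<phi> has_sum (\<Sum>n. \<phi> (int n))) (range int)"
    by (subst has_sum_reindex) (auto simp: o_def)
  have "((\<lambda>n. \<phi> (- int n - 1)) has_sum (\<Sum>n. \<phi> (- int n - 1))) UNIV"
    using norm_summable_imp_has_sum[OF assms(2) summable_sums[OF summable_norm_cancel[OF assms(2)]]] .
  hence neg: "(\<phi> has_sum (\<Sum>n. \<phi> (- int n - 1))) (range (\<lambda>n. - int n - 1))"
    by (subst has_sum_reindex) (auto simp: o_def inj_on_def)
  have "range int \<union> range (\<lambda>n. - int n - 1) = UNIV"
  proof -
    have "k \<in> range int \<or> k = - int (nat (- k - 1)) - 1" for k :: int
      by (cases "k \<ge> 0") (auto intro: image_eqI[of _ _ "nat k"])
    thus ?thesis by blast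
  qed
  moreover have "range int \<inter> range (\<lambda>n. - int n - 1) = {}" by auto
  ultimately have "(\<phi> has_sum ((\<Sum>n. \<phi> (int n)) + (\<Sum>n. \<phi> (- int n - 1)))) UNIV"
    using has_sum_Un_disjoint[OF nonneg neg] by simp
  thus ?thesis
    by (simp add: suminf_add[OF summable_norm_cancel[OF assms(1)] summable_norm_cancel[OF assms(2)]])
qed

lemma periodic_value_in_period:
  fixes f :: "real \<Rightarrow> 'a" and p :: real
  assumes "p > 0" and periodic: "\<And>x k. f (x + p * of_int k) = f x"
  shows "\<exists>y\<in>{0..<p}. f x = f y"
proof
  define k where "k = \<lfloor>x / p\<rfloor>"
  have "of_int k \<le> x / p" "x / p < of_int k + 1" unfolding k_def by linarith+
  thus "x - p * of_int k \<in> {0..<p}" using assms by (simp add: field_simps)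
  show "f x = f (x - p * of_int k)" using periodic[of "x - p * of_int k" k] by simp
qed

lemma periodic_nonvanishing_bounded_below:
  fixes f :: "real \<Rightarrow> 'a::real_normed_vector"
  assumes "p > 0" and periodic: "\<And>x k. f (x + p * of_int k) = f x"
    and cont: "\<And>x. isCont f x" and nonzero: "\<And>x. f x \<noteq> 0"
  shows "\<exists>\<delta>>0. \<forall>x. \<delta> \<le> norm (f x)"
proof -
  have "continuous_on {0..p} (\<lambda>x. norm (f x))"
    by (intro continuous_at_imp_continuous_on ballI continuous_intros cont)
  then obtain x0 where "x0 \<in> {0..p}" and min: "\<And>y. y \<in> {0..p} \<Longrightarrow> norm (f x0) \<le> norm (f y)"
    using continuous_attains_inf[of "{0..p}" "\<lambda>x. norm (f x)"] assms(1) by auto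
  have "norm (f x0) \<le> norm (f x)" for x
  proof -
    obtain y where "y \<in> {0..<p}" "f x = f y"
      using periodic_value_in_period[of p f x, OF assms(1) periodic] by blast
    thus ?thesis using min[of y] by simp
  qed
  thus ?thesis using nonzero[of x0] by (intro exI[of _ "norm (f x0)"]) auto
qed

lemma integrable_power2_norm_if_bounded:
  fixes f :: "'a \<Rightarrow> 'b::{banach, second_countable_topology}"
  assumes f: "integrable M f" and bound: "\<And>x. norm (f x) \<le> B"
  shows "integrable M (\<lambda>x. (norm (f x))\<^sup>2)"
proof (rule Bochner_Integration.integrable_bound)
  show "integrable M (\<lambda>x. B * norm (f x))"
    using f by (intro integrable_mult_right integrable_norm)
  show "(\<lambda>x. (norm (f x))\<^sup>2) \<in> borel_measurable M"
    using borel_measurable_integrable[OF f] by measurable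
  show "AE x in M. norm ((norm (f x))\<^sup>2) \<le> norm (B * norm (f x))"
  proof (rule AE_I2)
    fix x
    have "0 \<le> B" using bound[of x] norm_ge_zero[of "f x"] by linarith
    thus "norm ((norm (f x))\<^sup>2) \<le> norm (B * norm (f x))"
      using bound[of x] by (simp add: power2_eq_square mult_right_mono)
  qed
qed

lemma exp_ii_int_periodic:
  "exp (\<i> * of_real (\<xi> + 2 * pi * of_int k) * of_real (of_int m)) = exp (\<i> * of_real \<xi> * of_real (of_int m))"
proof -
  have "exp (\<i> * of_real (\<xi> + 2 * pi * of_int k) * of_real (of_int m))
        = exp (\<i> * of_real \<xi> * of_real (of_int m)) * exp ((2 * of_int (k * m) * pi) * \<i>)"
    by (simp add: exp_add[symmetric] algebra_simps)
  also have "exp ((2 * of_int (k * m) * pi) * \<i>) = 1"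
    by (rule exp_integer_2pi) simp
  finally show ?thesis by simp
qed

lemma integral_exp_ii_int_period:
  "(\<integral>x. indicator {0..<2*pi} x *\<^sub>R exp (\<i> * of_real x * of_real (of_int m)) \<partial>lborel)
     = (if m = 0 then 2 * pi else 0)"
proof -
  define F where "F x = (if m = 0 then of_real x else exp (\<i> * of_real x * of_real (of_int m)) / (\<i> * of_int m))"
    for x :: real
  have cont: "continuous_on {0..2*pi} (\<lambda>x. exp (\<i> * of_real x * of_real (of_int m)))"
    by (intro continuous_intros)
  have "(F has_vector_derivative exp (\<i> * of_real x * of_real (of_int m))) (at x within {0..2*pi})" for x
  proof (cases "m = 0")
    case False
    have "((\<lambda>z. exp (\<i> * z * of_real (of_int m)) / (\<i> * of_int m)) has_field_derivative
            exp (\<i> * of_real x * of_real (of_int m))) (at (of_real x))"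
      using False by (auto intro!: derivative_eq_intros simp: field_simps)
    from has_vector_derivative_real_field[OF this] show ?thesis
      using False unfolding F_def by (auto intro: has_vector_derivative_at_within)
  qed (auto simp: F_def[abs_def] intro!: derivative_eq_intros)
  hence "interval_lebesgue_integral lborel (ereal 0) (ereal (2*pi))
           (\<lambda>x. exp (\<i> * of_real x * of_real (of_int m))) = F (2*pi) - F 0"
    using cont by (intro interval_integral_FTC_finite) auto
  moreover have "exp (\<i> * of_real (2*pi) * of_real (of_int m)) = 1"
    using exp_ii_int_periodic[of 0 1 m] by simp
  ultimately show ?thesis
    by (simp add: F_def interval_integral_Ico set_lebesgue_integral_def)
qed

section \<open>Integrals over the line as integrals of periodizations\<close>

text \<open>Pairing the translates of [0, p) by k p for k = n and k = -n-1 indexes all integer translates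
  by n :: nat, as needed for countable additivity.\<close>

definition period_cell :: "real \<Rightarrow> nat \<Rightarrow> real set" where
  "period_cell p n = {p * real n ..< p * real n + p} \<union> {- (p * real n + p) ..< - (p * real n)}"

lemma period_cell_sets [measurable]: "period_cell p n \<in> sets lborel"
  unfolding period_cell_def by simp

lemma UN_period_cell:
  assumes "p > 0"
  shows "(\<Union>n. period_cell p n) = UNIV"
proof -
  have pos: "x \<in> period_cell p (nat \<lfloor>x / p\<rfloor>)" if "x \<ge> 0" for x
  proof -
    have "real (nat \<lfloor>x / p\<rfloor>) = of_int \<lfloor>x / p\<rfloor>" using that assms by simp
    moreover have "of_int \<lfloor>x / p\<rfloor> \<le> x / p" "x / p < of_int \<lfloor>x / p\<rfloor> + 1" by linarith+
    hence "of_int \<lfloor>x / p\<rfloor> * p \<le> x" "x < (of_int \<lfloor>x / p\<rfloor> + 1) * p"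
      using assms by (simp_all only: pos_le_divide_eq pos_divide_less_eq)
    ultimately show ?thesis unfolding period_cell_def by (simp add: algebra_simps)
  qed
  have neg: "x \<in> period_cell p (nat (\<lceil>- x / p\<rceil> - 1))" if "x < 0" for x
  proof -
    have "\<lceil>- x / p\<rceil> \<ge> 1" using that assms by (simp add: divide_neg_pos)
    hence n: "real (nat (\<lceil>- x / p\<rceil> - 1)) = of_int \<lceil>- x / p\<rceil> - 1" by simp
    have "of_int \<lceil>- x / p\<rceil> - 1 < - x / p" "- x / p \<le> of_int \<lceil>- x / p\<rceil>" by linarith+
    hence "(of_int \<lceil>- x / p\<rceil> - 1) * p < - x" "- x \<le> of_int \<lceil>- x / p\<rceil> * p"
      using assms by (simp_all only: pos_less_divide_eq pos_divide_le_eq)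
    hence "- (p * real (nat (\<lceil>- x / p\<rceil> - 1)) + p) \<le> x" "x < - (p * real (nat (\<lceil>- x / p\<rceil> - 1)))"
      unfolding n by (simp_all add: algebra_simps)
    thus ?thesis unfolding period_cell_def by simp
  qed
  have "\<exists>n. x \<in> period_cell p n" for x
    using pos[of x] neg[of x] by (cases "x \<ge> 0") auto
  thus ?thesis by blast
qed

lemma disjoint_period_cell:
  assumes "p > 0" "m \<noteq> n"
  shows "period_cell p m \<inter> period_cell p n = {}"
proof -
  have cells: "({a..<a+p} \<union> {-(a+p)..<-a}) \<inter> ({b..<b+p} \<union> {-(b+p)..<-b}) = {}"
    if "0 \<le> a" "a + p \<le> b" for a b :: real
    using that assms by auto
  have "period_cell p i \<inter> period_cell p j = {}" if "i < j" for i j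
  proof -
    have "p * (real i + 1) \<le> p * real j" using that assms by (intro mult_left_mono) auto
    thus ?thesis using cells[of "p * real i" "p * real j"] assms unfolding period_cell_def
      by (simp add: algebra_simps)
  qed
  thus ?thesis using assms(2) by (metis Int_commute nat_neq_iff)
qed

lemma integral_indicator_shift:
  fixes f :: "real \<Rightarrow> 'a::{banach, second_countable_topology}"
  shows "(\<integral>x. indicator {a..<b} x *\<^sub>R f x \<partial>lborel) = (\<integral>x. indicator {a-t..<b-t} x *\<^sub>R f (x + t) \<partial>lborel)"
proof -
  have "(\<integral>x. indicator {a..<b} x *\<^sub>R f x \<partial>lborel)
        = \<bar>1\<bar> *\<^sub>R (\<integral>x. indicator {a..<b} (t + 1 * x) *\<^sub>R f (t + 1 * x) \<partial>lborel)"
    by (rule lborel_integral_real_affine) simp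
  also have "\<dots> = (\<integral>x. indicator {a..<b} (t + x) *\<^sub>R f (t + x) \<partial>lborel)" by simp
  also have "\<dots> = (\<integral>x. indicator {a-t..<b-t} x *\<^sub>R f (x + t) \<partial>lborel)"
    by (rule Bochner_Integration.integral_cong) (auto simp: indicator_def add.commute)
  finally show ?thesis .
qed

lemma integrable_indicator_shift:
  fixes f :: "real \<Rightarrow> 'a::{banach, second_countable_topology}"
  assumes "integrable lborel f" "S \<in> sets lborel"
  shows "integrable lborel (\<lambda>x. indicator S x *\<^sub>R f (x + t))"
proof -
  have "integrable lborel (\<lambda>x. f (t + 1 * x))"
    by (rule lborel_integrable_real_affine[OF assms(1)]) simp
  thus ?thesis by (simp add: add.commute integrable_mult_indicator[OF assms(2)])
qed

definition period_fold :: "real \<Rightarrow> (real \<Rightarrow> 'a::real_vector) \<Rightarrow> nat \<Rightarrow> real \<Rightarrow> 'a" where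
  "period_fold p h n x = indicator {0..<p} x *\<^sub>R (h (x + p * real n) + h (x - p * (real n + 1)))"

lemma integrable_period_fold:
  fixes h :: "real \<Rightarrow> 'a::{banach, second_countable_topology}"
  assumes "integrable lborel h"
  shows "integrable lborel (period_fold p h n)"
  using integrable_indicator_shift[OF assms, of "{0..<p}" "p * real n"]
    integrable_indicator_shift[OF assms, of "{0..<p}" "- (p * (real n + 1))"]
  unfolding period_fold_def[abs_def] by (simp add: scaleR_add_right)

lemma norm_period_fold_le:
  "norm (period_fold p h n x) \<le> indicator {0..<p} x * norm (h (x + p * real n))
                                 + indicator {0..<p} x * norm (h (x - p * (real n + 1)))"
  unfolding period_fold_def by (simp add: norm_triangle_ineq indicator_def)

lemma integral_period_cell:
  fixes h :: "real \<Rightarrow> 'a::{banach, second_countable_topology}"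
  assumes "p > 0" "integrable lborel h"
  shows "(\<integral>x. indicator (period_cell p n) x *\<^sub>R h x \<partial>lborel) = integral\<^sup>L lborel (period_fold p h n)"
proof -
  let ?P = "{p * real n ..< p * real n + p}" and ?N = "{- (p * real n + p) ..< - (p * real n)}"
  have "0 \<le> p * real n" using assms by simp
  hence "indicator (period_cell p n) x *\<^sub>R h x = indicator ?P x *\<^sub>R h x + indicator ?N x *\<^sub>R h x" for x
    unfolding period_cell_def by (auto simp: indicator_def)
  hence "(\<integral>x. indicator (period_cell p n) x *\<^sub>R h x \<partial>lborel)
         = (\<integral>x. indicator ?P x *\<^sub>R h x \<partial>lborel) + (\<integral>x. indicator ?N x *\<^sub>R h x \<partial>lborel)"
    using assms by (simp add: integrable_mult_indicator)
  also have "\<dots> = (\<integral>x. indicator {0..<p} x *\<^sub>R h (x + p * real n) \<partial>lborel)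
                  + (\<integral>x. indicator {0..<p} x *\<^sub>R h (x - p * (real n + 1)) \<partial>lborel)"
    using integral_indicator_shift[of "p * real n" _ h "p * real n"]
      integral_indicator_shift[of "- (p * real n + p)" _ h "- (p * real n + p)"]
    by (simp add: algebra_simps)
  also have "\<dots> = integral\<^sup>L lborel (period_fold p h n)"
  proof -
    have "integrable lborel (\<lambda>x. indicator {0..<p} x *\<^sub>R h (x + p * real n))"
      by (rule integrable_indicator_shift[OF assms(2)]) simp
    moreover have "integrable lborel (\<lambda>x. indicator {0..<p} x *\<^sub>R h (x - p * (real n + 1)))"
      using integrable_indicator_shift[OF assms(2), of "{0..<p}" "- (p * (real n + 1))"] by simp
    ultimately show ?thesis unfolding period_fold_def by (simp add: scaleR_add_right)
  qed
  finally show ?thesis .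
qed

lemma integral_norm_period_fold_le:
  fixes h :: "real \<Rightarrow> 'a::{banach, second_countable_topology}"
  assumes p: "p > 0" and h: "integrable lborel h"
  shows "(\<integral>x. norm (period_fold p h n x) \<partial>lborel) \<le> (\<integral>x. indicator (period_cell p n) x * norm (h x) \<partial>lborel)"
proof -
  have shift: "integrable lborel (\<lambda>x. indicator {0..<p} x * norm (h (x + t)))" for t
    using integrable_indicator_shift[OF integrable_norm[OF h], of "{0..<p}" t] by simp
  have "(\<integral>x. norm (period_fold p h n x) \<partial>lborel)
        \<le> (\<integral>x. indicator {0..<p} x * norm (h (x + p * real n))
              + indicator {0..<p} x * norm (h (x - p * (real n + 1))) \<partial>lborel)"
    by (intro integral_mono integrable_norm integrable_period_fold h norm_period_fold_le
        Bochner_Integration.integrable_add shift shift[of "- (p * (real n + 1))", unfolded add_uminus_conv_diff])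
  also have "\<dots> = (\<integral>x. indicator (period_cell p n) x * norm (h x) \<partial>lborel)"
    using integral_period_cell[OF p integrable_norm[OF h], of n] by (simp add: period_fold_def[abs_def] distrib_left)
  finally show ?thesis .
qed

lemma summable_integral_norm_period_cell:
  fixes h :: "real \<Rightarrow> 'a::{banach, second_countable_topology}"
  assumes "p > 0" "integrable lborel h"
  shows "summable (\<lambda>n. \<integral>x. indicator (period_cell p n) x * norm (h x) \<partial>lborel)"
proof (rule summableI_nonneg_bounded)
  have int: "integrable lborel (\<lambda>x. indicator A x * norm (h x))" if "A \<in> sets lborel" for A
    using integrable_mult_indicator[OF that integrable_norm[OF assms(2)]] by simp
  show "0 \<le> (\<integral>x. indicator (period_cell p n) x * norm (h x) \<partial>lborel)" for n
    by (intro integral_nonneg_AE AE_I2) simp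
  fix n
  have "(\<Sum>i<n. \<integral>x. indicator (period_cell p i) x * norm (h x) \<partial>lborel)
        = (\<integral>x. (\<Sum>i<n. indicator (period_cell p i) x * norm (h x)) \<partial>lborel)"
    by (intro Bochner_Integration.integral_sum[symmetric] int period_cell_sets)
  also have "\<dots> = (\<integral>x. indicator (\<Union>i<n. period_cell p i) x * norm (h x) \<partial>lborel)"
    using disjoint_period_cell[OF assms(1)]
    by (simp add: sum_distrib_right[symmetric] indicator_UN_disjoint disjoint_family_on_def)
  also have "\<dots> \<le> (\<integral>x. norm (h x) \<partial>lborel)"
    using assms(2) int[OF sets.finite_UN[OF finite_lessThan period_cell_sets]]
    by (intro integral_mono) (auto simp: indicator_def)
  finally show "(\<Sum>i<n. \<integral>x. indicator (period_cell p i) x * norm (h x) \<partial>lborel) \<le> (\<integral>x. norm (h x) \<partial>lborel)" .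
qed

lemma integral_eq_integral_periodization:
  fixes h :: "real \<Rightarrow> 'a::{banach, second_countable_topology}"
  assumes p: "p > 0" and h: "integrable lborel h"
    and summable: "\<And>x. summable (\<lambda>n. norm (h (x + p * real n)) + norm (h (x - p * (real n + 1))))"
  shows "integral\<^sup>L lborel h
           = (\<integral>x. indicator {0..<p} x *\<^sub>R (\<Sum>n. h (x + p * real n) + h (x - p * (real n + 1))) \<partial>lborel)"
proof -
  have "set_integrable lborel (\<Union>n. period_cell p n) h"
    unfolding UN_period_cell[OF p] set_integrable_def using h by simp
  from lebesgue_integral_countable_add[OF period_cell_sets disjoint_period_cell[OF p] this]
  have "integral\<^sup>L lborel h = (\<Sum>n. \<integral>x. indicator (period_cell p n) x *\<^sub>R h x \<partial>lborel)"
    unfolding UN_period_cell[OF p] set_lebesgue_integral_def by simp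
  also have "\<dots> = (\<Sum>n. integral\<^sup>L lborel (period_fold p h n))"
    using integral_period_cell[OF p h] by simp
  also have "\<dots> = (\<integral>x. (\<Sum>n. period_fold p h n x) \<partial>lborel)"
  proof (rule integral_suminf[symmetric, OF integrable_period_fold[OF h]])
    show "AE x in lborel. summable (\<lambda>n. norm (period_fold p h n x))"
    proof (rule AE_I2)
      fix x
      have "summable (\<lambda>n. indicator {0..<p} x * norm (h (x + p * real n))
                               + indicator {0..<p} x * norm (h (x - p * (real n + 1))))"
        using summable_mult[OF summable[of x], of "indicator {0..<p} x"] by (simp add: distrib_left)
      thus "summable (\<lambda>n. norm (period_fold p h n x))"
        by (rule summable_comparison_test'[where N=0]) (simp only: real_norm_def abs_norm_cancel, rule norm_period_fold_le)
    qed
    show "summable (\<lambda>n. \<integral>x. norm (period_fold p h n x) \<partial>lborel)"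
      using integral_norm_period_fold_le[OF p h]
      by (intro summable_comparison_test'[OF summable_integral_norm_period_cell[OF p h], where N=0])
        (auto simp: integral_nonneg_AE)
  qed
  also have "\<dots> = (\<integral>x. indicator {0..<p} x *\<^sub>R (\<Sum>n. h (x + p * real n) + h (x - p * (real n + 1))) \<partial>lborel)"
  proof (rule Bochner_Integration.integral_cong[OF refl])
    fix x
    have "summable (\<lambda>n. norm (h (x + p * real n) + h (x - p * (real n + 1))))"
      by (rule summable_comparison_test'[OF summable[of x], where N=0]) (simp add: norm_triangle_ineq)
    hence "summable (\<lambda>n. h (x + p * real n) + h (x - p * (real n + 1)))"
      by (rule summable_norm_cancel)
    thus "(\<Sum>n. period_fold p h n x) = indicator {0..<p} x *\<^sub>R (\<Sum>n. h (x + p * real n) + h (x - p * (real n + 1)))"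
      unfolding period_fold_def by (simp add: suminf_scaleR_right)
  qed
  finally show ?thesis .
qed

section \<open>The symbol \<open>\<Xi>\<close>\<close>

lemma Xi_eq:
  assumes "t \<noteq> 0"
  shows "Xi t = Complex (sin t / t) ((cos t - 1) / t)"
proof -
  have "exp (- (\<i> * complex_of_real t)) = Complex (cos t) (- sin t)"
    using cis_conv_exp[of "- t"] by (simp add: cis.ctr)
  hence "1 - exp (- (\<i> * complex_of_real t)) = Complex (sin t / t) ((cos t - 1) / t) * (\<i> * complex_of_real t)"
    using assms by (simp add: complex_eq_iff field_simps)
  thus ?thesis using assms by (simp add: Xi_def)
qed

lemma norm_Xi_power2:
  assumes "t \<noteq> 0"
  shows "(norm (Xi t))\<^sup>2 = (2 - 2 * cos t) / t\<^sup>2"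
proof -
  have "(norm (Xi t))\<^sup>2 = ((sin t)\<^sup>2 + (cos t - 1)\<^sup>2) / t\<^sup>2"
    using assms by (simp add: Xi_eq cmod_power2 power_divide add_divide_distrib)
  also have "\<dots> = (2 - 2 * cos t) / t\<^sup>2"
    by (simp add: sin_squared_eq power2_eq_square algebra_simps)
  finally show ?thesis .
qed

lemma norm_Xi_le_1: "norm (Xi t) \<le> 1"
proof (cases "t = 0")
  case True thus ?thesis by (simp add: Xi_def)
next
  case False
  have "\<bar>sin (t/2)\<bar> \<le> \<bar>t/2\<bar>" by (rule abs_sin_x_le_abs_x)
  hence "(sin (t/2))\<^sup>2 \<le> (t/2)\<^sup>2"
    by (metis abs_ge_zero power2_abs power_mono)
  moreover have "cos t = 1 - 2 * (sin (t/2))\<^sup>2"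
    using cos_double_sin[of "t/2"] by simp
  ultimately have "(norm (Xi t))\<^sup>2 \<le> 1"
    using False by (simp add: norm_Xi_power2 power_divide)
  thus ?thesis by (metis abs_norm_cancel abs_square_le_1)
qed

lemma norm_Xi_mult_abs_le_2: "norm (Xi t) * \<bar>t\<bar> \<le> 2"
proof (cases "t = 0")
  case True thus ?thesis by simp
next
  case False
  have "(norm (Xi t) * \<bar>t\<bar>)\<^sup>2 = 2 - 2 * cos t"
    using False by (simp add: power_mult_distrib norm_Xi_power2)
  also have "\<dots> \<le> 2\<^sup>2" using cos_ge_minus_one[of t] by (simp add: power2_eq_square; linarith)
  finally show ?thesis
    by (rule power2_le_imp_le) simp
qed

lemma Xi_in_nonpos_Reals_imp_0:
  assumes "Xi t \<in> \<real>\<^sub>\<le>\<^sub>0"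
  shows "Xi t = 0"
proof -
  have t: "t \<noteq> 0" using assms by (auto simp: Xi_def complex_nonpos_Reals_iff)
  hence "cos t = 1" using assms by (simp add: Xi_eq complex_nonpos_Reals_iff)
  moreover from this have "sin t = 0" using sin_cos_squared_add[of t] by simp
  ultimately show "Xi t = 0" using t by (simp add: Xi_eq Complex_eq)
qed

lemma isCont_Xi: "isCont Xi x"
proof -
  have "((\<lambda>t::real. sin t / t) \<longlongrightarrow> 1) (at 0)"
    using DERIV_sin[of 0] unfolding has_field_derivative_iff by simp
  hence "isCont (\<lambda>t. if t = 0 then 1 else sin t / t) x"
    by (rule isCont_if_eq_0) (intro continuous_intros, simp)
  moreover have "((\<lambda>t::real. (cos t - 1) / t) \<longlongrightarrow> 0) (at 0)"
    using DERIV_cos[of 0] unfolding has_field_derivative_iff by simp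
  hence "isCont (\<lambda>t. if t = 0 then 0 else (cos t - 1) / t) x"
    by (rule isCont_if_eq_0) (intro continuous_intros, simp)
  ultimately have "isCont (\<lambda>t. Complex (if t = 0 then 1 else sin t / t) (if t = 0 then 0 else (cos t - 1) / t)) x"
    unfolding isCont_def by (rule tendsto_Complex)
  moreover have "Xi = (\<lambda>t. Complex (if t = 0 then 1 else sin t / t) (if t = 0 then 0 else (cos t - 1) / t))"
  proof
    show "Xi t = Complex (if t = 0 then 1 else sin t / t) (if t = 0 then 0 else (cos t - 1) / t)" for t
      by (cases "t = 0") (simp add: Xi_def complex_eq_iff, simp add: Xi_eq)
  qed
  ultimately show ?thesis by simp
qed

lemma isCont_Xi_powr:
  assumes "Re w > 0"
  shows "isCont (\<lambda>t. Xi t powr w) x"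
  unfolding isCont_def
proof (rule tendsto_powr_complex')
  show "Xi x \<notin> \<real>\<^sub>\<le>\<^sub>0 \<or> Xi x = 0 \<and> 0 < Re w"
    using Xi_in_nonpos_Reals_imp_0[of x] assms by auto
qed (use isCont_Xi[of x] in \<open>auto simp: isCont_def\<close>)

lemma Xi_shift_2pi_int:
  assumes "\<xi> + 2 * pi * of_int k \<noteq> 0"
  shows "Xi (\<xi> + 2 * pi * of_int k) =
           of_real (2 * sin (\<xi>/2) / (\<xi> + 2 * pi * of_int k)) * exp (- (\<i> * of_real (\<xi>/2)))"
proof -
  let ?t = "\<xi> + 2 * pi * of_int k"
  have "exp (- (\<i> * of_real ?t)) = exp (- (\<i> * of_real \<xi>)) * exp ((2 * of_int (- k) * pi) * \<i>)"
    by (simp add: exp_add[symmetric] algebra_simps)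
  also have "exp ((2 * of_int (- k) * pi) * \<i>) = 1"
    by (rule exp_integer_2pi) simp
  finally have per: "exp (- (\<i> * of_real ?t)) = exp (- (\<i> * of_real \<xi>))" by simp
  let ?a = "\<i> * of_real (\<xi>/2)"
  have "2 * \<i> * of_real (sin (\<xi>/2)) * exp (- ?a) = (exp ?a - exp (- ?a)) * exp (- ?a)"
    by (simp add: sin_of_real[symmetric] sin_exp_eq)
  also have "\<dots> = exp (?a + - ?a) - exp (- ?a + - ?a)"
    by (simp only: exp_add left_diff_distrib)
  also have "- ?a + - ?a = - (\<i> * of_real \<xi>)"
    by (simp add: field_simps)
  finally have half: "1 - exp (- (\<i> * of_real \<xi>)) = \<i> * (2 * of_real (sin (\<xi>/2)) * exp (- ?a))"
    by (simp add: mult_ac)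
  have "Xi ?t = (1 - exp (- (\<i> * of_real ?t))) / (\<i> * of_real ?t)"
    unfolding Xi_def using assms by (simp only: if_False mult_minus_left)
  also have "\<dots> = \<i> * (2 * of_real (sin (\<xi>/2)) * exp (- ?a)) / (\<i> * of_real ?t)"
    by (simp only: per half)
  also have "\<dots> = 2 * of_real (sin (\<xi>/2)) * exp (- ?a) / of_real ?t"
    by (rule mult_divide_mult_cancel_left) simp
  also have "\<dots> = of_real (2 * sin (\<xi>/2) / ?t) * exp (- ?a)"
    by (simp add: field_simps)
  finally show ?thesis .
qed

lemma Xi_2pi_int_eq_0: "k \<noteq> 0 \<Longrightarrow> Xi (2 * pi * of_int k) = 0"
  using Xi_shift_2pi_int[of 0 k] by simp

lemma norm_Xi_powr_le:
  assumes "Re w \<ge> 0"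
  shows "norm (Xi t powr w) \<le> exp (pi * \<bar>Im w\<bar>)"
proof -
  have "norm (Xi t powr w) \<le> exp (pi * \<bar>Im w\<bar>) * norm (Xi t) powr Re w"
    by (rule norm_powr_le)
  also have "\<dots> \<le> exp (pi * \<bar>Im w\<bar>) * 1"
    using norm_Xi_le_1[of t] assms by (intro mult_left_mono powr_le1) auto
  finally show ?thesis by simp
qed

lemma norm_Xi_powr_le_decay:
  assumes "Re w \<ge> 0" "a > 0" "2 * a \<le> \<bar>t\<bar>"
  shows "norm (Xi t powr w) \<le> exp (pi * \<bar>Im w\<bar>) * a powr (- Re w)"
proof -
  have t: "\<bar>t\<bar> > 0" using assms by linarith
  have "norm (Xi t) \<le> 2 / \<bar>t\<bar>" using norm_Xi_mult_abs_le_2[of t] t by (simp add: field_simps)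
  also have "\<dots> \<le> 1 / a" using assms t by (simp add: field_simps)
  finally have "norm (Xi t) powr Re w \<le> (1/a) powr Re w"
    using assms by (intro powr_mono2) auto
  also have "\<dots> = a powr (- Re w)" using assms by (simp add: powr_minus_divide powr_divide)
  finally show ?thesis
    using norm_powr_le[of "Xi t" w] by (meson exp_ge_zero mult_left_mono order_trans)
qed

lemma norm_Xi_powr_shift_le:
  assumes "Re w \<ge> 0" "n \<ge> 1" "\<bar>\<xi>\<bar> \<le> real n"
  shows "norm (Xi (\<xi> + 2 * pi * real n) powr w) \<le> exp (pi * \<bar>Im w\<bar>) * real n powr (- Re w)"
    and "norm (Xi (\<xi> - 2 * pi * (real n + 1)) powr w) \<le> exp (pi * \<bar>Im w\<bar>) * real n powr (- Re w)"
proof -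
  have n: "real n \<ge> 1" using assms by simp
  have "6 * real n \<le> 2 * pi * real n" using pi_gt3 by (intro mult_right_mono) auto
  hence "2 * real n \<le> \<bar>\<xi> + 2 * pi * real n\<bar>" "2 * real n \<le> \<bar>\<xi> - 2 * pi * (real n + 1)\<bar>"
    using assms n pi_gt3 by (simp_all add: algebra_simps, linarith+)
  thus "norm (Xi (\<xi> + 2 * pi * real n) powr w) \<le> exp (pi * \<bar>Im w\<bar>) * real n powr (- Re w)"
    "norm (Xi (\<xi> - 2 * pi * (real n + 1)) powr w) \<le> exp (pi * \<bar>Im w\<bar>) * real n powr (- Re w)"
    using n assms by (auto intro!: norm_Xi_powr_le_decay)
qed

definition tail_majorant :: "real \<Rightarrow> real \<Rightarrow> real" where
  "tail_majorant s x = indicator {-1..1} x + indicator {1..} x * x powr (- s) + indicator {1..} (- x) * (- x) powr (- s)"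

lemma integrable_tail_majorant:
  assumes "s > 1"
  shows "integrable lborel (tail_majorant s)"
proof -
  have "((\<lambda>x. x powr (- s)) has_integral -(1 powr (- s + 1)) / (- s + 1)) {1..}"
    using assms by (intro has_integral_powr_to_inf) auto
  hence "(\<lambda>x. x powr (- s)) absolutely_integrable_on {1..}"
    by (intro nonnegative_absolutely_integrable_1) auto
  hence "integrable lborel (\<lambda>x. indicator {1..} x * x powr (- s))"
    by (simp add: set_integrable_def integrable_completion)
  moreover from lborel_integrable_real_affine[OF this, of "- 1" 0]
  have "integrable lborel (\<lambda>x. indicator {1..} (- x) * (- x) powr (- s))" by simp
  ultimately show ?thesis
    unfolding tail_majorant_def[abs_def]
    by (intro Bochner_Integration.integrable_add) (auto simp: integrable_indicator_iff)
qed

lemma norm_Xi_powr_le_tail_majorant: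
  assumes "Re w > 0"
  shows "norm (Xi x powr w) \<le> exp (pi * \<bar>Im w\<bar>) * 2 powr Re w * tail_majorant (Re w) x"
proof (cases "\<bar>x\<bar> \<le> 1")
  case True
  have "1 \<le> tail_majorant (Re w) x" using True unfolding tail_majorant_def by (auto simp: indicator_def)
  moreover have "1 \<le> 2 powr Re w" using assms by (simp add: ge_one_powr_ge_zero)
  ultimately have "1 \<le> 2 powr Re w * tail_majorant (Re w) x" by (metis mult_mono' mult_1 zero_le_one)
  have "norm (Xi x powr w) \<le> exp (pi * \<bar>Im w\<bar>) * 1"
    using norm_Xi_powr_le[of w x] assms by simp
  also have "\<dots> \<le> exp (pi * \<bar>Im w\<bar>) * (2 powr Re w * tail_majorant (Re w) x)"
    using \<open>1 \<le> 2 powr Re w * tail_majorant (Re w) x\<close> by (intro mult_left_mono) auto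
  finally show ?thesis by (simp add: mult.assoc)
next
  case False
  have "norm (Xi x powr w) \<le> exp (pi * \<bar>Im w\<bar>) * (\<bar>x\<bar> / 2) powr (- Re w)"
    using False assms by (intro norm_Xi_powr_le_decay) auto
  also have "(\<bar>x\<bar> / 2) powr (- Re w) = 2 powr Re w * \<bar>x\<bar> powr (- Re w)"
    using False by (simp add: powr_divide powr_minus divide_simps)
  also have "\<bar>x\<bar> powr (- Re w) = tail_majorant (Re w) x"
    using False unfolding tail_majorant_def by (auto simp: indicator_def abs_if)
  finally show ?thesis by (simp add: mult.assoc)
qed

section \<open>The periodization of \<open>\<Xi>\<^sup>w\<close> and the Hurwitz zeta function\<close>

definition Xi_periodization :: "complex \<Rightarrow> real \<Rightarrow> complex" where
  "Xi_periodization w \<xi> = (\<Sum>\<^sub>\<infinity>k::int. Xi (\<xi> + 2 * pi * of_int k) powr w)"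

lemma summable_norm_Xi_powr_shift:
  assumes "Re w > 1"
  shows "summable (\<lambda>n. norm (Xi (\<xi> + 2 * pi * real n) powr w))"
    and "summable (\<lambda>n. norm (Xi (\<xi> - 2 * pi * (real n + 1)) powr w))"
proof -
  define N where "N = nat \<lceil>\<bar>\<xi>\<bar>\<rceil> + 1"
  have N: "n \<ge> N \<Longrightarrow> n \<ge> 1 \<and> \<bar>\<xi>\<bar> \<le> real n" for n
    unfolding N_def by linarith
  have S: "summable (\<lambda>n. exp (pi * \<bar>Im w\<bar>) * real n powr (- Re w))"
    using assms by (intro summable_mult) (simp add: summable_real_powr_iff)
  show "summable (\<lambda>n. norm (Xi (\<xi> + 2 * pi * real n) powr w))"
    "summable (\<lambda>n. norm (Xi (\<xi> - 2 * pi * (real n + 1)) powr w))"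
    using assms N norm_Xi_powr_shift_le[of w _ \<xi>]
    by (intro summable_comparison_test'[OF S, where N=N]; simp)+
qed

lemma has_sum_Xi_periodization:
  assumes "Re w > 1"
  shows "((\<lambda>k::int. Xi (\<xi> + 2 * pi * of_int k) powr w) has_sum
           (\<Sum>n. Xi (\<xi> + 2 * pi * real n) powr w + Xi (\<xi> - 2 * pi * (real n + 1)) powr w)) UNIV"
    and "((\<lambda>k::int. Xi (\<xi> + 2 * pi * of_int k) powr w) has_sum Xi_periodization w \<xi>) UNIV"
proof -
  have e: "\<xi> + 2 * pi * of_int (- int n - 1) = \<xi> - 2 * pi * (real n + 1)" for n
    by (simp add: algebra_simps)
  show *: "((\<lambda>k::int. Xi (\<xi> + 2 * pi * of_int k) powr w) has_sum
           (\<Sum>n. Xi (\<xi> + 2 * pi * real n) powr w + Xi (\<xi> - 2 * pi * (real n + 1)) powr w)) UNIV"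
    using has_sum_int_split[of "\<lambda>k. Xi (\<xi> + 2 * pi * of_int k) powr w"]
      summable_norm_Xi_powr_shift[OF assms, of \<xi>] unfolding e by simp
  show "((\<lambda>k::int. Xi (\<xi> + 2 * pi * of_int k) powr w) has_sum Xi_periodization w \<xi>) UNIV"
    unfolding Xi_periodization_def using has_sum_infsum[OF has_sum_imp_summable[OF *]] .
qed

lemma sums_Xi_periodization:
  assumes "Re w > 1"
  shows "(\<lambda>n. Xi (\<xi> + 2 * pi * real n) powr w + Xi (\<xi> - 2 * pi * (real n + 1)) powr w)
           sums Xi_periodization w \<xi>"
proof -
  have "Xi_periodization w \<xi> =
      (\<Sum>n. Xi (\<xi> + 2 * pi * real n) powr w + Xi (\<xi> - 2 * pi * (real n + 1)) powr w)"
    by (rule has_sum_unique[OF has_sum_Xi_periodization(2,1)[OF assms]])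
  moreover have "summable (\<lambda>n. Xi (\<xi> + 2 * pi * real n) powr w + Xi (\<xi> - 2 * pi * (real n + 1)) powr w)"
    using summable_norm_Xi_powr_shift[OF assms, of \<xi>, THEN summable_norm_cancel] by (rule summable_add)
  ultimately show ?thesis by (simp only: summable_sums)
qed

lemma Xi_periodization_periodic:
  "Xi_periodization w (\<xi> + 2 * pi * of_int j) = Xi_periodization w \<xi>"
proof -
  have "bij_betw (\<lambda>k::int. k + j) UNIV UNIV"
    by (rule bij_betwI[where g="\<lambda>k. k - j"]) auto
  have "Xi_periodization w (\<xi> + 2 * pi * of_int j)
        = (\<Sum>\<^sub>\<infinity>k::int. Xi (\<xi> + 2 * pi * of_int (k + j)) powr w)"
    unfolding Xi_periodization_def by (simp add: algebra_simps)
  also have "\<dots> = Xi_periodization w \<xi>"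
    unfolding Xi_periodization_def
    using infsum_reindex_bij_betw[OF \<open>bij_betw _ _ _\<close>, of "\<lambda>k. Xi (\<xi> + 2 * pi * of_int k) powr w"] .
  finally show ?thesis .
qed

lemma isCont_Xi_periodization:
  assumes w: "Re w > 1"
  shows "isCont (Xi_periodization w) \<xi>0"
proof -
  define A where "A = ball \<xi>0 1"
  define N where "N = nat \<lceil>\<bar>\<xi>0\<bar> + 1\<rceil> + 1"
  define E where "E = exp (pi * \<bar>Im w\<bar>)"
  let ?f = "\<lambda>n x. Xi (x + 2 * pi * real n) powr w + Xi (x - 2 * pi * (real n + 1)) powr w"
  have bound: "\<forall>x\<in>A. norm (?f n x) \<le> 2 * E * real n powr (- Re w)" if "n \<ge> N" for n
  proof
    fix x assume "x \<in> A"
    hence "\<bar>x\<bar> \<le> \<bar>\<xi>0\<bar> + 1" unfolding A_def by (auto simp: dist_real_def)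
    hence "n \<ge> 1" "\<bar>x\<bar> \<le> real n" using that unfolding N_def by linarith+
    hence "norm (Xi (x + 2 * pi * real n) powr w) \<le> E * real n powr (- Re w)"
      "norm (Xi (x - 2 * pi * (real n + 1)) powr w) \<le> E * real n powr (- Re w)"
      using norm_Xi_powr_shift_le[of w n x] w unfolding E_def by auto
    thus "norm (?f n x) \<le> 2 * E * real n powr (- Re w)"
      using norm_triangle_ineq[of "Xi (x + 2 * pi * real n) powr w" "Xi (x - 2 * pi * (real n + 1)) powr w"]
      by linarith
  qed
  have "uniform_limit A (\<lambda>n x. \<Sum>i<n. ?f i x) (\<lambda>x. \<Sum>i. ?f i x) sequentially"
  proof (rule Weierstrass_m_test_ev)
    show "\<forall>\<^sub>F n in sequentially. \<forall>x\<in>A. norm (?f n x) \<le> 2 * E * real n powr (- Re w)"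
      using bound by (auto simp: eventually_at_top_linorder)
    show "summable (\<lambda>n. 2 * E * real n powr (- Re w))"
      using w by (intro summable_mult) (simp add: summable_real_powr_iff)
  qed
  moreover have "continuous_on A (\<lambda>x. \<Sum>i<n. ?f i x)" for n
    using w by (intro continuous_on_sum continuous_at_imp_continuous_on ballI continuous_intros
        isCont_o2[OF _ isCont_Xi_powr]) auto
  ultimately have "continuous_on A (\<lambda>x. \<Sum>i. ?f i x)"
    by (intro uniform_limit_theorem) (auto intro: always_eventually)
  also have "(\<lambda>x. \<Sum>i. ?f i x) = Xi_periodization w"
    using sums_Xi_periodization[OF w] by (auto simp: sums_iff)
  finally have "continuous_on (ball \<xi>0 1) (Xi_periodization w)" unfolding A_def .
  thus ?thesis by (meson centre_in_ball continuous_on_eq_continuous_at open_ball zero_less_one)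
qed

lemma Xi_periodization_0:
  assumes "Re w > 1"
  shows "Xi_periodization w 0 = 1"
proof -
  have "Xi (2 * pi * of_int (- int n - 1)) = 0" for n
    by (rule Xi_2pi_int_eq_0) simp
  moreover have "2 * pi * of_int (- int n - 1) = 0 - 2 * pi * (real n + 1)" for n
    by (simp add: algebra_simps)
  moreover have "Xi (0 + 2 * pi * real n) = (if n = 0 then 1 else 0)" for n
    using Xi_2pi_int_eq_0[of "int n"] by (simp add: Xi_def)
  ultimately have "(\<lambda>n. Xi (0 + 2 * pi * real n) powr w + Xi (0 - 2 * pi * (real n + 1)) powr w)
                    = (\<lambda>n. if n = 0 then 1 else 0)"
    by (auto simp del: of_int_diff of_int_minus)
  hence "(\<lambda>n. if n = 0 then 1 else 0) sums Xi_periodization w 0"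
    using sums_Xi_periodization[OF assms, of 0] by simp
  thus ?thesis using sums_single[of 0 "\<lambda>_. 1::complex"] sums_unique2 by fastforce
qed

lemma Xi_powr_shift_nonneg:
  fixes w :: complex
  assumes "0 < \<xi>" "\<xi> < 2 * pi"
  shows "Xi (\<xi> + 2 * pi * real n) powr w =
           exp (w * (of_real (ln (sin (\<xi>/2) / pi)) - \<i> * of_real (\<xi>/2))) * of_real (\<xi> / (2*pi) + real n) powr (- w)"
proof -
  define c a where "c = sin (\<xi>/2) / pi" and "a = \<xi> / (2*pi) + real n"
  have c: "c > 0" unfolding c_def using assms by (intro divide_pos_pos sin_gt_zero) auto
  have a: "a > 0" unfolding a_def using assms by (simp add: add_pos_nonneg)
  have "0 \<le> 2 * pi * real n" by simp
  hence "\<xi> + 2 * pi * real n \<noteq> 0" using assms by linarith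
  hence "\<xi> + 2 * pi * of_int (int n) \<noteq> 0" by simp
  moreover have "2 * sin (\<xi>/2) / (\<xi> + 2 * pi * real n) = c / a"
    unfolding c_def a_def using assms by (simp add: field_simps)
  ultimately have "Xi (\<xi> + 2 * pi * real n) = of_real (c / a) * exp (- (\<i> * of_real (\<xi>/2)))"
    using Xi_shift_2pi_int[of \<xi> "int n"] by simp
  also have "of_real (c / a) = exp (of_real (ln c - ln a) :: complex)"
    using a c by (simp add: exp_diff exp_of_real)
  finally have "Xi (\<xi> + 2 * pi * real n) = exp (of_real (ln c - ln a) + - (\<i> * of_real (\<xi>/2)))"
    by (simp only: exp_add)
  also have "\<dots> powr w = exp (w * (of_real (ln c - ln a) + - (\<i> * of_real (\<xi>/2))))"
    \<comment> \<open>the exponent has imaginary part in \<open>(-\<pi>, \<pi>]\<close>, so it is the principal logarithm\<close>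
    using assms by (simp add: powr_def)
  also have "\<dots> = exp (w * (of_real (ln c) - \<i> * of_real (\<xi>/2))) * of_real a powr (- w)"
    by (simp add: of_real_powr_minus[OF a] exp_add[symmetric] algebra_simps)
  finally show ?thesis unfolding c_def a_def .
qed

lemma Xi_powr_shift_neg:
  fixes w :: complex
  assumes "0 < \<xi>" "\<xi> < 2 * pi"
  shows "Xi (\<xi> - 2 * pi * (real n + 1)) powr w =
           exp (w * (of_real (ln (sin (\<xi>/2) / pi)) + \<i> * of_real (pi - \<xi>/2))) * of_real (1 - \<xi> / (2*pi) + real n) powr (- w)"
proof -
  define c b where "c = sin (\<xi>/2) / pi" and "b = 1 - \<xi> / (2*pi) + real n"
  have c: "c > 0" unfolding c_def using assms by (intro divide_pos_pos sin_gt_zero) auto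
  have b: "b > 0" unfolding b_def using assms by (simp add: add_pos_nonneg)
  have e: "\<xi> - 2 * pi * (real n + 1) = \<xi> + 2 * pi * of_int (- int n - 1)" by (simp add: algebra_simps)
  have "2 * pi * 1 \<le> 2 * pi * (real n + 1)" by (intro mult_left_mono) auto
  hence neg: "\<xi> - 2 * pi * (real n + 1) < 0" using assms by linarith
  moreover have "2 * sin (\<xi>/2) / (\<xi> - 2 * pi * (real n + 1)) = - (c / b)"
    unfolding c_def b_def using assms neg by (simp add: field_simps)
  ultimately have "Xi (\<xi> - 2 * pi * (real n + 1)) = of_real (c / b) * - exp (- (\<i> * of_real (\<xi>/2)))"
    using Xi_shift_2pi_int[of \<xi> "- int n - 1"] unfolding e[symmetric] by simp
  also have "of_real (c / b) = exp (of_real (ln c - ln b) :: complex)"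
    using b c by (simp add: exp_diff exp_of_real)
  also have "- exp (- (\<i> * of_real (\<xi>/2))) = exp (\<i> * of_real (pi - \<xi>/2))"
  proof -
    have "\<i> * of_real (pi - \<xi>/2) = \<i> * of_real pi + - (\<i> * of_real (\<xi>/2))"
      by (simp add: algebra_simps)
    thus ?thesis by (simp only: exp_add exp_pi_i') simp
  qed
  finally have "Xi (\<xi> - 2 * pi * (real n + 1)) = exp (of_real (ln c - ln b) + \<i> * of_real (pi - \<xi>/2))"
    by (simp add: exp_add)
  also have "\<dots> powr w = exp (w * (of_real (ln c - ln b) + \<i> * of_real (pi - \<xi>/2)))"
    using assms by (simp add: powr_def)
  also have "\<dots> = exp (w * (of_real (ln c) + \<i> * of_real (pi - \<xi>/2))) * of_real b powr (- w)"
    by (simp add: of_real_powr_minus[OF b] exp_add[symmetric] algebra_simps)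
  finally show ?thesis unfolding c_def b_def .
qed

lemma Xi_periodization_eq_hurwitz_zeta:
  assumes w: "Re w > 1" and \<xi>: "0 < \<xi>" "\<xi> < 2 * pi"
  shows "Xi_periodization w \<xi> = exp (w * (of_real (ln (sin (\<xi>/2) / pi)) - \<i> * of_real (\<xi>/2)))
           * (hurwitz_zeta w (\<xi> / (2*pi)) + exp (\<i> * of_real pi * w) * hurwitz_zeta w (1 - \<xi> / (2*pi)))"
proof -
  define \<alpha> where "\<alpha> = \<xi> / (2*pi)"
  define K where "K = exp (w * (of_real (ln (sin (\<xi>/2) / pi)) - \<i> * of_real (\<xi>/2)))"
  define h1 h2 where "h1 n = (of_real (\<alpha> + real n) :: complex) powr (- w)"
    and "h2 n = (of_real ((1 - \<alpha>) + real n) :: complex) powr (- w)" for n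
  have "exp (w * (of_real (ln (sin (\<xi>/2) / pi)) + \<i> * of_real (pi - \<xi>/2))) = K * exp (\<i> * of_real pi * w)"
    unfolding K_def by (simp add: exp_add[symmetric] algebra_simps)
  hence shifts: "Xi (\<xi> + 2 * pi * real n) powr w = K * h1 n"
    "Xi (\<xi> - 2 * pi * (real n + 1)) powr w = K * exp (\<i> * of_real pi * w) * h2 n" for n
    unfolding K_def h1_def h2_def \<alpha>_def using Xi_powr_shift_nonneg[OF \<xi>] Xi_powr_shift_neg[OF \<xi>]
    by (simp_all add: algebra_simps)
  have K: "K \<noteq> 0" "K * exp (\<i> * of_real pi * w) \<noteq> 0" unfolding K_def by simp_all
  have "summable h1" "summable h2"
    using summable_norm_Xi_powr_shift[OF w, of \<xi>, THEN summable_norm_cancel] K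
    unfolding shifts by (simp_all add: summable_cmult_iff)
  hence "(\<lambda>n. K * h1 n + K * exp (\<i> * of_real pi * w) * h2 n)
           sums (K * suminf h1 + K * exp (\<i> * of_real pi * w) * suminf h2)"
    by (intro sums_add sums_mult summable_sums)
  moreover have "hurwitz_zeta w \<alpha> = suminf h1" "hurwitz_zeta w (1 - \<alpha>) = suminf h2"
    unfolding hurwitz_zeta_def h1_def h2_def by simp_all
  ultimately show ?thesis
    using sums_unique2[OF sums_Xi_periodization[OF w, of \<xi>, unfolded shifts]]
    unfolding K_def \<alpha>_def by (simp add: algebra_simps)
qed

definition hurwitz_nonvanishing :: "complex \<Rightarrow> bool" where
  "hurwitz_nonvanishing w \<longleftrightarrow> (\<forall>\<alpha>::real. 0 < \<alpha> \<and> \<alpha> < 1 \<longrightarrow>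
      hurwitz_zeta w \<alpha> + exp (- \<i> * of_real pi * w) * hurwitz_zeta w (1 - \<alpha>) \<noteq> 0)"

lemma Xi_periodization_nonzero:
  assumes w: "Re w > 1" and hz: "hurwitz_nonvanishing w"
  shows "Xi_periodization w \<xi> \<noteq> 0"
proof -
  obtain y where y: "y \<in> {0..<2*pi}" "Xi_periodization w \<xi> = Xi_periodization w y"
    using periodic_value_in_period[of "2*pi" "Xi_periodization w" \<xi>, OF _ Xi_periodization_periodic]
    by auto
  show ?thesis
  proof (cases "y = 0")
    case True thus ?thesis using y Xi_periodization_0[OF w] by simp
  next
    case False
    define \<alpha> where "\<alpha> = y / (2*pi)"
    have "0 < 1 - \<alpha> \<and> 1 - \<alpha> < 1" using y False unfolding \<alpha>_def by auto
    hence "hurwitz_zeta w (1 - \<alpha>) + exp (- \<i> * of_real pi * w) * hurwitz_zeta w \<alpha> \<noteq> 0"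
      using hz[unfolded hurwitz_nonvanishing_def, rule_format, of "1 - \<alpha>"] by simp
    moreover have "exp (\<i> * of_real pi * w) * (hurwitz_zeta w (1 - \<alpha>) + exp (- \<i> * of_real pi * w) * hurwitz_zeta w \<alpha>)
                   = hurwitz_zeta w \<alpha> + exp (\<i> * of_real pi * w) * hurwitz_zeta w (1 - \<alpha>)"
      by (simp add: distrib_left mult.assoc[symmetric] exp_add[symmetric])
    ultimately have "hurwitz_zeta w \<alpha> + exp (\<i> * of_real pi * w) * hurwitz_zeta w (1 - \<alpha>) \<noteq> 0"
      by (metis exp_not_eq_zero mult_eq_0_iff)
    thus ?thesis
      using y False Xi_periodization_eq_hurwitz_zeta[OF w, of y] unfolding \<alpha>_def by simp
  qed
qed

lemma Xi_periodization_bounded_below: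
  assumes "Re w > 1" and "hurwitz_nonvanishing w"
  shows "\<exists>\<delta>>0. \<forall>\<xi>. \<delta> \<le> norm (Xi_periodization w \<xi>)"
  by (rule periodic_nonvanishing_bounded_below[where p="2*pi"])
    (simp_all add: Xi_periodization_periodic isCont_Xi_periodization Xi_periodization_nonzero assms)

section \<open>The scalar cardinal functions \<open>\<Xi>\<^sup>w / T\<^sub>w\<close>\<close>

definition Xi_cardinal :: "complex \<Rightarrow> real \<Rightarrow> complex" where
  "Xi_cardinal w \<xi> = Xi \<xi> powr w / Xi_periodization w \<xi>"

context
  fixes w :: complex
  assumes w: "Re w > 1" and hz: "hurwitz_nonvanishing w"
begin

lemma isCont_Xi_cardinal: "isCont (Xi_cardinal w) \<xi>"
  unfolding Xi_cardinal_def[abs_def] using w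
  by (intro continuous_intros isCont_Xi_powr isCont_Xi_periodization Xi_periodization_nonzero hz) auto

lemma borel_measurable_Xi_cardinal: "Xi_cardinal w \<in> borel_measurable lborel"
  using isCont_Xi_cardinal
  by (simp add: borel_measurable_continuous_onI continuous_at_imp_continuous_on)

lemma norm_Xi_cardinal_le:
  obtains \<delta> where "\<delta> > 0" "\<And>\<xi>. norm (Xi_cardinal w \<xi>) \<le> norm (Xi \<xi> powr w) / \<delta>"
proof -
  obtain \<delta> where \<delta>: "\<delta> > 0" "\<And>\<xi>. \<delta> \<le> norm (Xi_periodization w \<xi>)"
    using Xi_periodization_bounded_below[OF w hz] by blast
  have "norm (Xi_cardinal w \<xi>) \<le> norm (Xi \<xi> powr w) / \<delta>" for \<xi>
    unfolding Xi_cardinal_def norm_divide using \<delta>(1) \<delta>(2)[of \<xi>]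
    by (intro divide_left_mono mult_pos_pos) auto
  with \<delta> show ?thesis using that by blast
qed

lemma bounded_Xi_cardinal: "\<exists>B. \<forall>\<xi>. norm (Xi_cardinal w \<xi>) \<le> B"
proof -
  obtain \<delta> where "\<delta> > 0" "\<And>\<xi>. norm (Xi_cardinal w \<xi>) \<le> norm (Xi \<xi> powr w) / \<delta>"
    using norm_Xi_cardinal_le by blast
  moreover have "norm (Xi \<xi> powr w) / \<delta> \<le> exp (pi * \<bar>Im w\<bar>) / \<delta>" for \<xi>
    using norm_Xi_powr_le[of w \<xi>] w \<open>\<delta> > 0\<close> by (intro divide_right_mono) auto
  ultimately have "norm (Xi_cardinal w \<xi>) \<le> exp (pi * \<bar>Im w\<bar>) / \<delta>" for \<xi>
    using order_trans by blast
  thus ?thesis by blast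
qed

lemma integrable_Xi_cardinal: "integrable lborel (Xi_cardinal w)"
proof -
  obtain \<delta> where \<delta>: "\<delta> > 0" "\<And>\<xi>. norm (Xi_cardinal w \<xi>) \<le> norm (Xi \<xi> powr w) / \<delta>"
    using norm_Xi_cardinal_le by blast
  define C where "C = exp (pi * \<bar>Im w\<bar>) * 2 powr Re w / \<delta>"
  have tail: "0 \<le> tail_majorant (Re w) \<xi>" for \<xi>
    unfolding tail_majorant_def by (auto simp: indicator_def)
  have bound: "norm (Xi_cardinal w \<xi>) \<le> C * tail_majorant (Re w) \<xi>" for \<xi>
  proof -
    have "norm (Xi \<xi> powr w) / \<delta> \<le> exp (pi * \<bar>Im w\<bar>) * 2 powr Re w * tail_majorant (Re w) \<xi> / \<delta>"
      using w \<delta>(1) by (intro divide_right_mono norm_Xi_powr_le_tail_majorant) auto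
    thus ?thesis using \<delta>(2)[of \<xi>] unfolding C_def by simp
  qed
  have "0 \<le> C" unfolding C_def using \<delta>(1) by simp
  show ?thesis
  proof (rule Bochner_Integration.integrable_bound[OF _ borel_measurable_Xi_cardinal])
    show "integrable lborel (\<lambda>\<xi>. C * tail_majorant (Re w) \<xi>)"
      using integrable_tail_majorant w by simp
    show "AE \<xi> in lborel. norm (Xi_cardinal w \<xi>) \<le> norm (C * tail_majorant (Re w) \<xi>)"
      using bound \<open>0 \<le> C\<close> tail by (simp add: abs_mult)
  qed
qed

lemma integrable_exp_ii_int_Xi_cardinal:
  "integrable lborel (\<lambda>\<xi>. exp (\<i> * of_real \<xi> * of_real (of_int m)) * Xi_cardinal w \<xi>)"
proof (rule Bochner_Integration.integrable_bound[OF integrable_Xi_cardinal])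
  show "(\<lambda>\<xi>. exp (\<i> * of_real \<xi> * of_real (of_int m)) * Xi_cardinal w \<xi>) \<in> borel_measurable lborel"
    by (intro borel_measurable_times borel_measurable_Xi_cardinal) measurable
  have "norm (exp (\<i> * of_real \<xi> * of_real (of_int m))) = 1" for \<xi>
    using norm_exp_i_times[of "\<xi> * of_int m"] by (simp add: mult.assoc)
  thus "AE \<xi> in lborel. norm (exp (\<i> * of_real \<xi> * of_real (of_int m)) * Xi_cardinal w \<xi>) \<le> norm (Xi_cardinal w \<xi>)"
    by (simp add: norm_mult)
qed

lemma integral_exp_ii_int_Xi_cardinal:
  "(\<integral>\<xi>. exp (\<i> * of_real \<xi> * of_real (of_int m)) * Xi_cardinal w \<xi> \<partial>lborel) = (if m = 0 then 2 * pi else 0)"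
proof -
  define e where "e \<xi> = exp (\<i> * of_real \<xi> * of_real (of_int m))" for \<xi>
  define h where "h \<xi> = e \<xi> * Xi_cardinal w \<xi>" for \<xi>
  have h_integrable: "integrable lborel h"
    unfolding h_def[abs_def] e_def by (rule integrable_exp_ii_int_Xi_cardinal)
  have e_periodic: "e (x + 2 * pi * of_int k) = e x" for x k
    unfolding e_def by (rule exp_ii_int_periodic)
  have shift: "h (x + 2 * pi * real n) = e x / Xi_periodization w x * Xi (x + 2 * pi * real n) powr w"
    "h (x - 2 * pi * (real n + 1)) = e x / Xi_periodization w x * Xi (x - 2 * pi * (real n + 1)) powr w" for x n
  proof -
    have "x - 2 * pi * (real n + 1) = x + 2 * pi * of_int (- int n - 1)" by (simp add: algebra_simps)
    thus "h (x - 2 * pi * (real n + 1)) = e x / Xi_periodization w x * Xi (x - 2 * pi * (real n + 1)) powr w"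
      unfolding h_def Xi_cardinal_def by (simp only: e_periodic Xi_periodization_periodic) simp
    show "h (x + 2 * pi * real n) = e x / Xi_periodization w x * Xi (x + 2 * pi * real n) powr w"
      using e_periodic[of x "int n"] Xi_periodization_periodic[of w x "int n"]
      unfolding h_def Xi_cardinal_def by simp
  qed
  have "integral\<^sup>L lborel h = (\<integral>x. indicator {0..<2*pi} x *\<^sub>R
          (\<Sum>n. h (x + 2 * pi * real n) + h (x - 2 * pi * (real n + 1))) \<partial>lborel)"
  proof (rule integral_eq_integral_periodization)
    show "summable (\<lambda>n. norm (h (x + 2 * pi * real n)) + norm (h (x - 2 * pi * (real n + 1))))" for x
      unfolding shift norm_mult distrib_left[symmetric]
      using summable_norm_Xi_powr_shift[OF w, of x] by (intro summable_mult summable_add)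
  qed (use h_integrable in simp_all)
  also have "\<dots> = (\<integral>x. indicator {0..<2*pi} x *\<^sub>R e x \<partial>lborel)"
  proof -
    have "(\<lambda>n. h (x + 2 * pi * real n) + h (x - 2 * pi * (real n + 1)))
            sums (e x / Xi_periodization w x * Xi_periodization w x)" for x
      unfolding shift distrib_left[symmetric] using sums_Xi_periodization[OF w, of x] by (rule sums_mult)
    thus ?thesis using Xi_periodization_nonzero[OF w hz] by (simp add: sums_iff)
  qed
  finally show ?thesis unfolding h_def e_def integral_exp_ii_int_period .
qed

end

section \<open>The quaternionic fundamental function\<close>

context
  fixes q :: hquat and w :: complex
  assumes q: "hq_vnorm q \<noteq> 0" and w_def: "w = Complex (hq_re q) (hq_vnorm q)"
    and w: "Re w > 1" "hurwitz_nonvanishing w"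
    and cnj_w: "Re (cnj w) > 1" "hurwitz_nonvanishing (cnj w)"
begin

lemma Bhat_eq_spectral: "Bhat q \<xi> = cq_spectral q (Xi \<xi> powr w) (Xi \<xi> powr cnj w)"
proof -
  have "cnj w = Complex (hq_re q) (- hq_vnorm q)" unfolding w_def by (simp add: complex_eq_iff)
  thus ?thesis unfolding Bhat_def w_def by (simp add: cq_power_eq_spectral[OF q])
qed

lemma has_sum_Bhat_shifts:
  "((\<lambda>k::int. Bhat q (\<xi> + 2 * pi * of_int k)) has_sum
      cq_spectral q (Xi_periodization w \<xi>) (Xi_periodization (cnj w) \<xi>)) UNIV"
  unfolding Bhat_eq_spectral by (intro has_sum_cq_spectral has_sum_Xi_periodization(2) w(1) cnj_w(1))

lemma Fq_eq_spectral: "Fq q \<xi> = cq_spectral q (Xi_periodization w \<xi>) (Xi_periodization (cnj w) \<xi>)"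
  unfolding Fq_def using has_sum_Bhat_shifts by (rule infsumI)

lemma Fq_inverse:
  "cq_invertible (Fq q \<xi>)"
  "cq_inverse (Fq q \<xi>) = cq_spectral q (1 / Xi_periodization w \<xi>) (1 / Xi_periodization (cnj w) \<xi>)"
  unfolding Fq_eq_spectral
  using cq_spectral_inverse[OF q Xi_periodization_nonzero[OF w, of \<xi>] Xi_periodization_nonzero[OF cnj_w, of \<xi>]]
  by simp_all

lemma Lhat_eq_spectral: "Lhat q = (\<lambda>\<xi>. cq_spectral q (Xi_cardinal w \<xi>) (Xi_cardinal (cnj w) \<xi>))"
  by (simp add: fun_eq_iff Lhat_def Fq_inverse Bhat_eq_spectral cq_spectral_mult[OF q] Xi_cardinal_def)

lemma integrable_Lhat: "integrable lborel (Lhat q)"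
  unfolding Lhat_eq_spectral by (intro integrable_cq_spectral integrable_Xi_cardinal w cnj_w)

lemma integrable_norm_Lhat_power2: "integrable lborel (\<lambda>\<xi>. (norm (Lhat q \<xi>))\<^sup>2)"
proof -
  obtain B B' where "\<And>\<xi>. norm (Xi_cardinal w \<xi>) \<le> B" "\<And>\<xi>. norm (Xi_cardinal (cnj w) \<xi>) \<le> B'"
    using bounded_Xi_cardinal[OF w] bounded_Xi_cardinal[OF cnj_w] by blast
  hence "norm (Lhat q \<xi>) \<le> (B + B') * (norm (cq_idempotent q 1) + norm (cq_idempotent q (- 1)))" for \<xi>
    unfolding Lhat_eq_spectral by (intro order_trans[OF norm_cq_spectral_le] mult_right_mono add_mono) auto
  thus ?thesis by (rule integrable_power2_norm_if_bounded[OF integrable_Lhat])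
qed

lemma Lq_of_int: "Lq q (of_int m) = (if m = 0 then cq_one else 0)"
proof -
  have "Lq q (of_int m) = (1 / (2 * pi)) *\<^sub>R cq_spectral q
          (\<integral>\<xi>. exp (\<i> * of_real \<xi> * of_real (of_int m)) * Xi_cardinal w \<xi> \<partial>lborel)
          (\<integral>\<xi>. exp (\<i> * of_real \<xi> * of_real (of_int m)) * Xi_cardinal (cnj w) \<xi> \<partial>lborel)"
    unfolding Lq_def Lhat_eq_spectral cq_spectral_smult
    by (subst integral_cq_spectral) (use integrable_exp_ii_int_Xi_cardinal w cnj_w in auto)
  thus ?thesis
    unfolding integral_exp_ii_int_Xi_cardinal[OF w] integral_exp_ii_int_Xi_cardinal[OF cnj_w]
    by (simp add: cq_spectral_scaleR cq_spectral_one cq_spectral_zero)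
qed

end

lemma admissible_R_memD:
  assumes "admissible_R R" "w \<in> R"
  shows "Re w > 1" "hurwitz_nonvanishing w" "cnj w \<in> R"
  using assms unfolding admissible_R_def hurwitz_nonvanishing_def by auto

theorem theorem3:
  fixes R :: "complex set" and q :: hquat
  assumes "admissible_R R" and "q \<in> Q_R R"
  shows "(\<forall>\<xi>::real. (\<lambda>k::int. Bhat q (\<xi> + 2 * pi * of_int k)) summable_on UNIV
                    \<and> cq_invertible (Fq q \<xi>))
       \<and> integrable lborel (Lhat q)
       \<and> Lhat q \<in> borel_measurable lborel
       \<and> integrable lborel (\<lambda>\<xi>. (norm (Lhat q \<xi>))\<^sup>2)
       \<and> (\<forall>m::int. Lq q (of_int m) = (if m = 0 then cq_one else 0))"
proof -
  define w where "w = Complex (hq_re q) (hq_vnorm q)"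
  have q: "hq_vnorm q \<noteq> 0" and "w \<in> R" using assms(2) unfolding Q_R_def w_def by auto
  note w = admissible_R_memD[OF assms(1) this(2)]
  note scalar = q w_def w(1,2) admissible_R_memD(1,2)[OF assms(1) w(3)]
  show ?thesis
    using has_sum_Bhat_shifts[OF scalar] Fq_inverse[OF scalar] integrable_Lhat[OF scalar]
      integrable_norm_Lhat_power2[OF scalar] Lq_of_int[OF scalar]
    by (auto simp: summable_on_def borel_measurable_integrable)
qed

end
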